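(* Let $G$ be a finite graph. If there are integers $a\ge 0$ and $b\ge 2$ such that $\phi^a_b(G)\ge 2\chi(G)$, then $\chi_c(G)=\chi(G)$.
   Context: $\chi_c(G)$ is the circular chromatic number: the minimum of $n/d$ such that $G$ has a homomorphism to the circular complete graph $K_{n/d}$ (vertices $0,\dots,n-1$, $i\sim j$ iff $d\le|i-j|\le n-d$). An independent set $F$ of $G$ is free if it is contained in at least two distinct maximal independent sets; an edge $uv$ supports $F$ if $F\cap(N(u)\cup N(v))=\emptyset$. For integers $a\ge0,b\ge1$, $\phi^a_b(G)$ is the minimum $t$ such that $V(G)$ is partitioned into independent sets $V_1,\dots,V_t$ with $V_1,\dots,V_{t-a}$ free, and there are edges $e_1,\dots,e_{t-a}$ (not necessarily distinct) with $e_i$ supporting $V_i$ and every vertex incident with at most $b$ of $e_1,\dots,e_{t-a}$; $\phi^a_b(G)=\infty$ if no such $t$ exists. *)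

theory Defs
  imports Complex_Main "HOL-Library.Extended_Nat"
begin

definition finite_graph :: "'a set \<Rightarrow> 'a set set \<Rightarrow> bool" where
  "finite_graph V E \<longleftrightarrow> finite V \<and>
     (\<forall>e\<in>E. \<exists>u v. e = {u, v} \<and> u \<noteq> v \<and> u \<in> V \<and> v \<in> V)"

definition nbhd :: "'a set set \<Rightarrow> 'a \<Rightarrow> 'a set" where
  "nbhd E u = {w. {u, w} \<in> E}"

definition indep :: "'a set \<Rightarrow> 'a set set \<Rightarrow> 'a set \<Rightarrow> bool" where
  "indep V E S \<longleftrightarrow> S \<subseteq> V \<and> (\<forall>u\<in>S. \<forall>v\<in>S. {u, v} \<notin> E)"

definition max_indep :: "'a set \<Rightarrow> 'a set set \<Rightarrow> 'a set \<Rightarrow> bool" where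
  "max_indep V E S \<longleftrightarrow> indep V E S \<and> (\<forall>T. indep V E T \<and> S \<subseteq> T \<longrightarrow> T = S)"

definition free_set :: "'a set \<Rightarrow> 'a set set \<Rightarrow> 'a set \<Rightarrow> bool" where
  "free_set V E F \<longleftrightarrow> indep V E F \<and>
     (\<exists>M1 M2. M1 \<noteq> M2 \<and> max_indep V E M1 \<and> max_indep V E M2 \<and> F \<subseteq> M1 \<and> F \<subseteq> M2)"

definition supports :: "'a set set \<Rightarrow> 'a set \<Rightarrow> 'a set \<Rightarrow> bool" where
  "supports E e F \<longleftrightarrow> e \<in> E \<and> (\<forall>u\<in>e. F \<inter> nbhd E u = {})"

text \<open>Admissible t for phi^a_b: partition of V into nonempty independent sets P 0, ..., P (t-1);
  the first t - a of them (truncated subtraction) are free and supported by edges e 0, ..., e (t-a-1),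
  each vertex incident with at most b of these edges (counted with multiplicity).\<close>
definition phi_admissible :: "nat \<Rightarrow> nat \<Rightarrow> 'a set \<Rightarrow> 'a set set \<Rightarrow> nat \<Rightarrow> bool" where
  "phi_admissible a b V E t \<longleftrightarrow>
     (\<exists>P :: nat \<Rightarrow> 'a set. \<exists>e :: nat \<Rightarrow> 'a set.
        (\<Union>i<t. P i) = V \<and>
        (\<forall>i<t. \<forall>j<t. i \<noteq> j \<longrightarrow> P i \<inter> P j = {}) \<and>
        (\<forall>i<t. P i \<noteq> {} \<and> indep V E (P i)) \<and>
        (\<forall>i<t - a. free_set V E (P i) \<and> supports E (e i) (P i)) \<and>
        (\<forall>v\<in>V. card {i. i < t - a \<and> v \<in> e i} \<le> b))"

definition phi :: "nat \<Rightarrow> nat \<Rightarrow> 'a set \<Rightarrow> 'a set set \<Rightarrow> enat" where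
  "phi a b V E = Inf {enat t | t. phi_admissible a b V E t}"

definition colorable :: "'a set \<Rightarrow> 'a set set \<Rightarrow> nat \<Rightarrow> bool" where
  "colorable V E k \<longleftrightarrow> (\<exists>c :: 'a \<Rightarrow> nat. (\<forall>v\<in>V. c v < k) \<and> (\<forall>u v. {u, v} \<in> E \<longrightarrow> c u \<noteq> c v))"

definition chromatic_number :: "'a set \<Rightarrow> 'a set set \<Rightarrow> nat" where
  "chromatic_number V E = (LEAST k. colorable V E k)"

definition circ_colorable :: "'a set \<Rightarrow> 'a set set \<Rightarrow> nat \<Rightarrow> nat \<Rightarrow> bool" where
  "circ_colorable V E n d \<longleftrightarrow> (\<exists>c :: 'a \<Rightarrow> nat. (\<forall>v\<in>V. c v < n) \<and>
     (\<forall>u v. {u, v} \<in> E \<longrightarrow>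
        int d \<le> \<bar>int (c u) - int (c v)\<bar> \<and> \<bar>int (c u) - int (c v)\<bar> \<le> int n - int d))"

definition circular_chromatic_number :: "'a set \<Rightarrow> 'a set set \<Rightarrow> real" where
  "circular_chromatic_number V E =
     Inf {real n / real d | n d. 1 \<le> d \<and> d \<le> n \<and> circ_colorable V E n d}"

end

theory Submission
  imports Defs
begin

(* Suppose chi_c(G) < chi(G) = k and take a circular (n,d)-coloring with n/d < k and n minimal.
   Then d >= 2 (otherwise it is an ordinary n-coloring), gcd n d = 1 (otherwise divide both by
   the gcd), and the coloring is tight: every color s has an edge to color s - d (mod n).
   Indeed, if s is not tight, rotate s to 0 and recolor its class with n - 1; the coloring then
   avoids 0, and x |-> floor (x n' / n) turns it into a circular (n',d')-coloring, where n'/d' is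
   the Farey predecessor of n/d (n d' - n' d = 1), contradicting minimality.
   Cutting the colors into ceiling (n / (d - 1)) blocks of d - 1 consecutive colors gives
   independent sets; the block starting at p is supported by a tight edge joining the colors
   p + d - 1 and p - 1, and every vertex lies on at most two of these edges. Hence
   phi^a_b(G) <= ceiling (n / (d - 1)) < 2k whenever b >= 2. *)

definition circ_adj :: "nat \<Rightarrow> nat \<Rightarrow> nat \<Rightarrow> nat \<Rightarrow> bool" where
  "circ_adj n d x y \<longleftrightarrow> int d \<le> \<bar>int x - int y\<bar> \<and> \<bar>int x - int y\<bar> \<le> int n - int d"

definition circ_coloring :: "'a set \<Rightarrow> 'a set set \<Rightarrow> nat \<Rightarrow> nat \<Rightarrow> ('a \<Rightarrow> nat) \<Rightarrow> bool" where
  "circ_coloring V E n d c \<longleftrightarrow>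
     (\<forall>v\<in>V. c v < n) \<and> (\<forall>u v. {u, v} \<in> E \<longrightarrow> circ_adj n d (c u) (c v))"

lemma circ_colorable_iff: "circ_colorable V E n d \<longleftrightarrow> (\<exists>c. circ_coloring V E n d c)"
  unfolding circ_colorable_def circ_coloring_def circ_adj_def by simp

lemma circ_adj_nat:
  "circ_adj n d x y \<longleftrightarrow> (y + d \<le> x \<and> x + d \<le> y + n) \<or> (x + d \<le> y \<and> y + d \<le> x + n)"
  unfolding circ_adj_def by (auto simp: abs_if)

lemma circ_adj_commute: "circ_adj n d x y \<longleftrightarrow> circ_adj n d y x"
  unfolding circ_adj_nat by auto

lemma circ_adj_imp_le: "circ_adj n d x y \<Longrightarrow> 2 * d \<le> n"
  unfolding circ_adj_nat by linarith

lemma circ_adj_iff_mod: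
  assumes "x < n" "y < n"
  shows "circ_adj n d x y \<longleftrightarrow>
    int d \<le> (int x - int y) mod int n \<and> (int x - int y) mod int n \<le> int n - int d"
proof (cases "y \<le> x")
  case True
  then have "(int x - int y) mod int n = int x - int y" using assms by (intro mod_pos_pos_trivial) auto
  then show ?thesis using True unfolding circ_adj_nat by linarith
next
  case False
  have "(int x - int y) mod int n = (int x - int y + int n) mod int n" by simp
  also have "\<dots> = int x - int y + int n" using False assms by (intro mod_pos_pos_trivial) auto
  finally have "(int x - int y) mod int n = int x - int y + int n" .
  then show ?thesis using False unfolding circ_adj_nat by linarith
qed

lemma circ_adj_rotate:
  assumes "x < n" "y < n"
  shows "circ_adj n d ((x + r) mod n) ((y + r) mod n) \<longleftrightarrow> circ_adj n d x y"
proof -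
  have "(int ((x + r) mod n) - int ((y + r) mod n)) mod int n = (int x - int y) mod int n"
    by (simp add: zmod_int mod_diff_eq)
  then show ?thesis using assms by (simp add: circ_adj_iff_mod)
qed

lemma edge_endpoints:
  assumes "finite_graph V E" "{u, v} \<in> E"
  shows "u \<in> V" "v \<in> V" "u \<noteq> v"
proof -
  obtain x y where "{u, v} = {x, y}" "x \<noteq> y" "x \<in> V" "y \<in> V"
    using assms unfolding finite_graph_def by blast
  then show "u \<in> V" "v \<in> V" "u \<noteq> v" by (metis doubleton_eq_iff)+
qed

lemma colorable_chromatic_number:
  assumes "finite_graph V E"
  shows "colorable V E (chromatic_number V E)"
proof -
  obtain f :: "'a \<Rightarrow> nat" and N where f: "f ` V = {..<N}" "inj_on f V"
    using assms finite_imp_inj_to_nat_seg unfolding finite_graph_def lessThan_def by metis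
  have "colorable V E N" unfolding colorable_def
  proof (intro exI[of _ f] conjI allI impI ballI)
    show "f v < N" if "v \<in> V" for v using f(1) that by blast
    show "f u \<noteq> f v" if "{u, v} \<in> E" for u v
      using f(2) edge_endpoints[OF assms that] by (metis inj_onD)
  qed
  then show ?thesis unfolding chromatic_number_def by (rule LeastI)
qed

lemma chromatic_number_le: "colorable V E k \<Longrightarrow> chromatic_number V E \<le> k"
  unfolding chromatic_number_def by (rule Least_le)

lemma indep_extends_to_max_indep:
  assumes "finite V" "indep V E S"
  shows "\<exists>M. max_indep V E M \<and> S \<subseteq> M"
  using assms(2)
proof (induction "card (V - S)" arbitrary: S rule: less_induct)
  case less
  show ?case
  proof (cases "max_indep V E S")
    case True
    then show ?thesis by blast
  next
    case False
    then obtain T where T: "indep V E T" "S \<subseteq> T" "T \<noteq> S"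
      using less.prems unfolding max_indep_def by blast
    have "T \<subseteq> V" using T(1) unfolding indep_def by simp
    then have "V - T \<subset> V - S" using T(2,3) by blast
    then have "card (V - T) < card (V - S)" using assms(1) by (simp add: psubset_card_mono)
    then obtain M where "max_indep V E M" "T \<subseteq> M" using less.hyps T(1) by blast
    then show ?thesis using T(2) by blast
  qed
qed

lemma supported_indep_is_free:
  assumes G: "finite_graph V E" and F: "indep V E F" and "supports E e F"
  shows "free_set V E F"
proof -
  have "e \<in> E" using assms(3) unfolding supports_def by simp
  then obtain x y where e: "e = {x, y}" using G unfolding finite_graph_def by blast
  with \<open>e \<in> E\<close> have xy: "{x, y} \<in> E" by simp
  have extend: "\<exists>M. max_indep V E M \<and> insert z F \<subseteq> M" if z: "z \<in> e" for z
  proof (rule indep_extends_to_max_indep)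
    show "finite V" using G unfolding finite_graph_def by simp
    have "z \<in> V" using z e edge_endpoints(1,2)[OF G xy] by blast
    moreover have "{z, z} \<notin> E" using edge_endpoints(3)[OF G, of z z] by blast
    moreover have zf: "{z, f} \<notin> E" if "f \<in> F" for f
      using assms(3) z that unfolding supports_def nbhd_def by blast
    moreover have "{f, z} \<notin> E" if "f \<in> F" for f using zf[OF that] by (simp add: insert_commute)
    ultimately show "indep V E (insert z F)" using F unfolding indep_def by auto
  qed
  obtain Mx where Mx: "max_indep V E Mx" "insert x F \<subseteq> Mx" using extend[of x] unfolding e by blast
  obtain My where My: "max_indep V E My" "insert y F \<subseteq> My" using extend[of y] unfolding e by blast
  have "Mx \<noteq> My"
  proof
    assume "Mx = My"
    then have "x \<in> Mx" "y \<in> Mx" using Mx(2) My(2) by auto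
    then show False using Mx(1) xy unfolding max_indep_def indep_def by blast
  qed
  then show ?thesis unfolding free_set_def using F Mx My by blast
qed

lemma circ_coloring_rotate:
  assumes G: "finite_graph V E" and c: "circ_coloring V E n d c"
  shows "circ_coloring V E n d (\<lambda>v. (c v + r) mod n)"
  unfolding circ_coloring_def
proof (intro conjI ballI allI impI)
  fix v assume "v \<in> V"
  then show "(c v + r) mod n < n" using c unfolding circ_coloring_def by auto
next
  fix u v assume uv: "{u, v} \<in> E"
  then have "c u < n" "c v < n" "circ_adj n d (c u) (c v)"
    using c edge_endpoints[OF G uv] unfolding circ_coloring_def by auto
  then show "circ_adj n d ((c u + r) mod n) ((c v + r) mod n)" by (simp add: circ_adj_rotate)
qed

lemma circ_adj_div:
  assumes "circ_adj n d x y" "g dvd n" "g dvd d" "0 < g"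
  shows "circ_adj (n div g) (d div g) (x div g) (y div g)"
proof -
  obtain n1 d1 where nd: "n = g * n1" "d = g * d1" using assms(2,3) by (auto elim!: dvdE)
  have le: "p div g + d1 \<le> q div g + m" if "p + g * d1 \<le> q + g * m" for p q m
  proof -
    have "(p + g * d1) div g \<le> (q + g * m) div g" using that by (rule div_le_mono)
    then show ?thesis using assms(4) by simp
  qed
  show ?thesis
    using assms(1) le[of _ _ 0] le[of _ _ n1] assms(4) unfolding circ_adj_nat nd by auto
qed

lemma circ_coloring_div:
  assumes c: "circ_coloring V E n d c" and "g dvd n" "g dvd d" "0 < g"
  shows "circ_coloring V E (n div g) (d div g) (\<lambda>v. c v div g)"
proof -
  have "x div g < n div g" if "x < n" for x
    using that assms(2,4) by (metis div_less_iff_less_mult dvd_div_mult_self)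
  then show ?thesis using c circ_adj_div[OF _ assms(2-4)] unfolding circ_coloring_def by blast
qed

lemma circ_adj_from_zero_to_top:
  assumes "circ_adj n d 0 y" "y \<noteq> n - d" "1 \<le> d"
  shows "circ_adj n d (n - 1) y"
  using assms unfolding circ_adj_nat by linarith

lemma circ_coloring_avoid_zero:
  assumes G: "finite_graph V E" and c: "circ_coloring V E n d c" and "1 \<le> d"
    and no_edge: "\<not> (\<exists>u v. {u, v} \<in> E \<and> c u = 0 \<and> c v = n - d)"
  shows "circ_coloring V E n d (\<lambda>v. if c v = 0 then n - 1 else c v)"
  unfolding circ_coloring_def
proof (intro conjI ballI allI impI)
  fix v assume "v \<in> V"
  then show "(if c v = 0 then n - 1 else c v) < n" using c unfolding circ_coloring_def by auto
next
  fix u v assume uv: "{u, v} \<in> E"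
  have vu: "{v, u} \<in> E" using uv by (simp add: insert_commute)
  have adj: "circ_adj n d (c u) (c v)" using c uv unfolding circ_coloring_def by blast
  then have "c u \<noteq> c v" using \<open>1 \<le> d\<close> unfolding circ_adj_nat by auto
  moreover have "c u = 0 \<Longrightarrow> circ_adj n d (n - 1) (c v)"
    using adj no_edge uv \<open>1 \<le> d\<close> by (metis circ_adj_from_zero_to_top)
  moreover have "c v = 0 \<Longrightarrow> circ_adj n d (n - 1) (c u)"
    using adj no_edge vu \<open>1 \<le> d\<close> by (metis circ_adj_commute circ_adj_from_zero_to_top)
  ultimately show "circ_adj n d (if c u = 0 then n - 1 else c u) (if c v = 0 then n - 1 else c v)"
    using adj circ_adj_commute by auto
qed

definition tight_circ_coloring :: "'a set set \<Rightarrow> nat \<Rightarrow> nat \<Rightarrow> ('a \<Rightarrow> nat) \<Rightarrow> bool" where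
  "tight_circ_coloring E n d c \<longleftrightarrow>
     (\<forall>s<n. \<exists>u v. {u, v} \<in> E \<and> c u = s \<and> c v = (s + (n - d)) mod n)"

lemma circ_coloring_avoiding_zero_if_not_tight:
  assumes G: "finite_graph V E" and c: "circ_coloring V E n d c" and "1 \<le> d" "2 \<le> n"
    and "\<not> tight_circ_coloring E n d c"
  shows "\<exists>c'. circ_coloring V E n d c' \<and> (\<forall>v\<in>V. 1 \<le> c' v)"
proof -
  obtain s where s: "s < n"
    and no_edge: "\<not> (\<exists>u v. {u, v} \<in> E \<and> c u = s \<and> c v = (s + (n - d)) mod n)"
    using assms(5) unfolding tight_circ_coloring_def by blast
  define c1 where "c1 v = (c v + (n - s)) mod n" for v
  have c1: "circ_coloring V E n d c1" unfolding c1_def by (rule circ_coloring_rotate[OF G c])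
  have unrotate: "c v = (c1 v + s) mod n" if "v \<in> V" for v
  proof -
    have "c v < n" using c that unfolding circ_coloring_def by blast
    moreover have "(c1 v + s) mod n = (c v + n) mod n" unfolding c1_def using s by (simp add: mod_add_left_eq)
    ultimately show ?thesis by simp
  qed
  have "\<not> (\<exists>u v. {u, v} \<in> E \<and> c1 u = 0 \<and> c1 v = n - d)"
  proof
    assume "\<exists>u v. {u, v} \<in> E \<and> c1 u = 0 \<and> c1 v = n - d"
    then obtain u v where uv: "{u, v} \<in> E" "c1 u = 0" "c1 v = n - d" by blast
    then have "c u = s" "c v = (s + (n - d)) mod n"
      using unrotate edge_endpoints[OF G uv(1)] s by (simp_all add: add.commute)
    then show False using no_edge uv(1) by blast
  qed
  then have "circ_coloring V E n d (\<lambda>v. if c1 v = 0 then n - 1 else c1 v)"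
    by (rule circ_coloring_avoid_zero[OF G c1 assms(3)])
  moreover have "\<forall>v\<in>V. 1 \<le> (if c1 v = 0 then n - 1 else c1 v)" using assms(4) by auto
  ultimately show ?thesis by blast
qed

lemma mod_mult_pos_if_coprime:
  fixes x n n' :: int
  assumes "coprime n n'" "0 < x" "x < n"
  shows "0 < x * n' mod n"
proof -
  have "x * n' mod n \<noteq> 0"
  proof
    assume "x * n' mod n = 0"
    then have "n dvd x" using assms(1) by (simp add: mod_eq_0_iff_dvd coprime_dvd_mult_left_iff)
    then show False using assms(2,3) zdvd_imp_le by fastforce
  qed
  moreover have "0 \<le> x * n' mod n" using assms(2,3) by simp
  ultimately show ?thesis by linarith
qed

lemma floor_scale_lower:
  fixes x y n d n' d' :: int
  assumes eq: "n * d' = n' * d + 1" and "0 \<le> n'" "0 < n" "x + d \<le> y" "0 < x * n' mod n"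
  shows "x * n' div n + d' \<le> y * n' div n"
proof -
  define q r where "q = x * n' div n" and "r = x * n' mod n"
  have "n * (q + d') = n * q + n' * d + 1" using eq by (simp add: algebra_simps)
  also have "\<dots> \<le> n * q + r + d * n'" using assms(5) unfolding r_def by simp
  also have "\<dots> = (x + d) * n'" unfolding q_def r_def by (simp add: algebra_simps)
  also have "\<dots> \<le> y * n'" using assms(2,4) by (intro mult_right_mono) auto
  finally have "n * (q + d') div n \<le> y * n' div n" using assms(3) by (intro zdiv_mono1) auto
  then show ?thesis unfolding q_def using assms(3) by simp
qed

lemma floor_scale_upper:
  fixes x y n d n' d' :: int
  assumes eq: "n * d' = n' * d + 1" and "1 \<le> n'" "0 < n" "0 < x" "d \<le> y - x" "y - x \<le> n - d"
    "y < n" and r_pos: "0 < x * n' mod n"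
  shows "y * n' div n \<le> x * n' div n + n' - d'"
proof -
  define q r where "q = x * n' div n" and "r = x * n' mod n"
  have xqr: "x * n' = n * q + r" and "r < n" unfolding q_def r_def using assms(3) by simp_all
  have "y * n' < n * (q + n' - d' + 1)"
  proof (cases "y - x = n - d")
    case True
    \<comment> \<open>If r were n - 1 then n would divide d (x n' + 1) = x n d' + d - x, hence d - x.\<close>
    have "r \<noteq> n - 1"
    proof
      assume "r = n - 1"
      then have "x * n' + 1 = n * (q + 1)" using xqr by (simp add: algebra_simps)
      then have "n dvd d * (x * n' + 1)" by simp
      moreover have "d * (x * n' + 1) = n * (x * d') + (d - x)"
      proof -
        have "d * (x * n' + 1) = x * (n' * d + 1) + (d - x)" by (simp add: algebra_simps)
        then show ?thesis unfolding eq[symmetric] by (simp add: algebra_simps)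
      qed
      ultimately have "n dvd d - x" by (metis dvd_add_right_iff dvd_triv_left)
      moreover have "0 < d - x" using True assms(7) by linarith
      ultimately have "n \<le> d - x" by (rule zdvd_imp_le)
      then show False using assms(4-7) by linarith
    qed
    then have "r \<le> n - 2" using \<open>r < n\<close> by linarith
    have "y = x + (n - d)" using True by simp
    then have "y * n' = (x + (n - d)) * n'" by (rule arg_cong)
    also have "\<dots> = x * n' + n * n' - n' * d" by (simp add: algebra_simps)
    also have "\<dots> = n * q + r + n * n' - n * d' + 1" using xqr eq by simp
    finally show ?thesis using \<open>r \<le> n - 2\<close> by (simp add: algebra_simps)
  next
    case False
    then have "y * n' \<le> (x + (n - d - 1)) * n'" using assms(2,6) by (intro mult_right_mono) auto
    also have "\<dots> = n * q + r + n * n' - n * d' + 1 - n'" using xqr eq by (simp add: algebra_simps)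
    finally show ?thesis using \<open>r < n\<close> assms(2) by (simp add: algebra_simps)
  qed
  then have "n * (y * n' div n) < n * (q + n' - d' + 1)"
    using mult_div_mod_eq[of n "y * n'"] pos_mod_sign[OF assms(3), of "y * n'"] by linarith
  then have "y * n' div n < q + n' - d' + 1" using assms(3) by simp
  then show ?thesis unfolding q_def by linarith
qed

lemma circ_adj_scale_down:
  fixes n d n' d' :: nat
  assumes eq: "n * d' = n' * d + 1" and "1 \<le> d" "1 \<le> n'"
    and "1 \<le> x" "1 \<le> y" "x < n" "y < n" and adj: "circ_adj n d x y"
  shows "circ_adj n' d' (x * n' div n) (y * n' div n)"
proof -
  have gap: "circ_adj n' d' (p * n' div n) (q * n' div n)"
    if "1 \<le> p" "p + d \<le> q" "q + d \<le> p + n" "q < n" for p q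
  proof -
    have eq': "int n * int d' = int n' * int d + 1" using eq by (metis of_nat_add of_nat_mult of_nat_1)
    have "coprime (int n) (int n')"
    proof (rule coprimeI)
      fix e assume "e dvd int n" "e dvd int n'"
      then have "e dvd int n * int d' - int n' * int d" by simp
      then show "is_unit e" using eq' by simp
    qed
    then have r_pos: "0 < int p * int n' mod int n" using that by (intro mod_mult_pos_if_coprime) auto
    have "int p * int n' div int n + int d' \<le> int q * int n' div int n"
      using that by (intro floor_scale_lower[OF eq' _ _ _ r_pos]) auto
    moreover have "int q * int n' div int n \<le> int p * int n' div int n + int n' - int d'"
      using that assms(3) by (intro floor_scale_upper[OF eq' _ _ _ _ _ _ r_pos]) auto
    ultimately show ?thesis unfolding circ_adj_def by (simp add: zdiv_int abs_if)
  qed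
  from adj consider "y + d \<le> x" "x + d \<le> y + n" | "x + d \<le> y" "y + d \<le> x + n"
    unfolding circ_adj_nat by blast
  then show ?thesis
  proof cases
    case 1
    then show ?thesis using gap[of y x] assms(5,6) circ_adj_commute by blast
  next
    case 2
    then show ?thesis using gap[of x y] assms(4,7) by blast
  qed
qed

lemma circ_coloring_scale_down:
  assumes G: "finite_graph V E" and c: "circ_coloring V E n d c" and pos: "\<forall>v\<in>V. 1 \<le> c v"
    and eq: "n * d' = n' * d + 1" and "1 \<le> d" "1 \<le> n'"
  shows "circ_coloring V E n' d' (\<lambda>v. c v * n' div n)"
  unfolding circ_coloring_def
proof (intro conjI ballI allI impI)
  fix v assume "v \<in> V"
  then have "c v * n' < n' * n" using c \<open>1 \<le> n'\<close> unfolding circ_coloring_def by simp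
  then show "c v * n' div n < n'" by (rule less_mult_imp_div_less)
next
  fix u v assume uv: "{u, v} \<in> E"
  then have "u \<in> V" "v \<in> V" using edge_endpoints[OF G] by blast+
  then show "circ_adj n' d' (c u * n' div n) (c v * n' div n)"
    using c pos uv circ_adj_scale_down[OF eq assms(5,6)] unfolding circ_coloring_def by blast
qed

lemma farey_predecessor:
  fixes n d :: nat
  assumes "coprime n d" "2 \<le> d" "d < n"
  obtains n' d' where "n * d' = n' * d + 1" "1 \<le> d'" "d' < d" "1 \<le> n'" "n' < n"
proof -
  obtain x y where "n * x = d * y + gcd n d" using bezout_nat[of n d] assms(3) by auto
  then have xy: "n * x = d * y + 1" using assms(1) by simp
  define d' where "d' = x mod d"
  define n' where "n' = n * d' div d"
  have "n * d' mod d = n * x mod d" unfolding d'_def by (simp add: mod_mult_right_eq)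
  also have "\<dots> = (1 + y * d) mod d" using xy by (simp add: ac_simps)
  also have "\<dots> = 1 mod d" by (rule mod_mult_self1)
  also have "\<dots> = 1" using assms(2) by simp
  finally have m1: "n * d' mod d = 1" .
  then have eq: "n * d' = n' * d + 1" unfolding n'_def using div_mult_mod_eq[of "n * d'" d] by simp
  have "1 \<le> d'" using m1 by (cases "d' = 0") auto
  moreover have "d' < d" unfolding d'_def using assms(2) by simp
  moreover have "1 \<le> n'"
  proof (rule ccontr)
    assume "\<not> 1 \<le> n'"
    then have "n * d' = 1" using eq by simp
    then show False using assms(2,3) by simp
  qed
  moreover have "n' < n"
  proof -
    have "n * d' < n * d" using \<open>d' < d\<close> assms(3) by simp
    then have "n' * d < n * d" using eq by linarith
    then show ?thesis by simp
  qed
  ultimately show ?thesis using eq that by blast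
qed

lemma circ_adj_same_block:
  assumes "x div q = y div q" "0 < q" "d = q + 1"
  shows "\<not> circ_adj n d x y"
proof -
  have "x mod q < q" "y mod q < q" using assms(2) by simp_all
  moreover have "x div q * q = y div q * q" using assms(1) by simp
  ultimately have "x < y + q" "y < x + q"
    using div_mult_mod_eq[of x q] div_mult_mod_eq[of y q] by linarith+
  then show ?thesis unfolding circ_adj_nat assms(3) by linarith
qed

lemma circ_adj_block_ends:
  assumes "p \<le> z" "z < p + q" "z < n" "p < n" "d = q + 1" "2 * d \<le> n"
  shows "\<not> circ_adj n d ((p + q) mod n) z" "\<not> circ_adj n d ((p + (n - 1)) mod n) z"
  using assms by (auto simp: circ_adj_nat mod_if)

lemma inj_on_mod_progression:
  fixes q n r :: nat
  assumes "0 < q" "\<And>i. i < m \<Longrightarrow> i * q < n"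
  shows "inj_on (\<lambda>i. (i * q + r) mod n) {..<m}"
proof -
  have False if "i < j" "j < m" "(i * q + r) mod n = (j * q + r) mod n" for i j
  proof -
    have "n dvd (j * q + r) - (i * q + r)"
      using that mod_eq_dvd_iff_nat[of "i * q + r" "j * q + r" n] by simp
    then have "n dvd (j - i) * q" by (simp add: diff_mult_distrib)
    moreover have "0 < (j - i) * q" using that assms(1) by simp
    ultimately have "n \<le> (j - i) * q" by (rule dvd_imp_le)
    moreover have "(j - i) * q < n" using assms(2) that by simp
    ultimately show False by simp
  qed
  then show ?thesis unfolding inj_on_def by (metis lessThan_iff linorder_neqE_nat)
qed

lemma card_members_two_injections:
  assumes "finite I" "inj_on f I" "inj_on g I" "\<And>i. i \<in> I \<Longrightarrow> h ` e i \<subseteq> {f i, g i}"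
  shows "card {i \<in> I. v \<in> e i} \<le> 2"
proof -
  have "{i \<in> I. v \<in> e i} \<subseteq> (f -` {h v} \<inter> I) \<union> (g -` {h v} \<inter> I)"
  proof
    fix i assume "i \<in> {i \<in> I. v \<in> e i}"
    then have "i \<in> I" "h v \<in> {f i, g i}" using assms(4) by auto
    then show "i \<in> (f -` {h v} \<inter> I) \<union> (g -` {h v} \<inter> I)" by auto
  qed
  then have "card {i \<in> I. v \<in> e i} \<le> card ((f -` {h v} \<inter> I) \<union> (g -` {h v} \<inter> I))"
    using assms(1) by (intro card_mono) simp_all
  also have "\<dots> \<le> card (f -` {h v} \<inter> I) + card (g -` {h v} \<inter> I)" by (rule card_Un_le)
  also have "\<dots> \<le> 1 + 1"
    using card_vimage_inj_on_le[OF assms(2), of "{h v}"] card_vimage_inj_on_le[OF assms(3), of "{h v}"]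
    by (intro add_mono) simp_all
  finally show ?thesis by simp
qed

lemma supports_color_interval:
  assumes c: "circ_coloring V E n d c" and "d = q + 1" "2 * d \<le> n" "p < n"
    and uw: "{u, w} \<in> E" "c u = (p + q) mod n" "c w = (p + (n - 1)) mod n"
    and F: "F \<subseteq> V" "\<And>z. z \<in> F \<Longrightarrow> p \<le> c z \<and> c z < p + q"
  shows "supports E {u, w} F"
  unfolding supports_def
proof (intro conjI ballI)
  fix y assume "y \<in> {u, w}"
  then have y: "c y = (p + q) mod n \<or> c y = (p + (n - 1)) mod n" using uw by blast
  have "\<not> circ_adj n d (c y) (c z)" if "z \<in> F" for z
  proof -
    have "c z < n" using c F(1) that unfolding circ_coloring_def by blast
    with F(2)[OF that] have
      "\<not> circ_adj n d ((p + q) mod n) (c z)" "\<not> circ_adj n d ((p + (n - 1)) mod n) (c z)"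
      using circ_adj_block_ends[of p "c z" q n d] assms(2-4) by simp_all
    with y show ?thesis by auto
  qed
  then show "F \<inter> nbhd E y = {}" using c unfolding nbhd_def circ_coloring_def by blast
qed (rule uw(1))

lemma phi_admissible_of_tight_circ_coloring:
  assumes G: "finite_graph V E" and c: "circ_coloring V E n d c"
    and tight: "tight_circ_coloring E n d c" and "2 \<le> d" "2 * d \<le> n" "2 \<le> b"
  shows "phi_admissible a b V E ((n - 1) div (d - 1) + 1)"
proof -
  define q where "q = d - 1"
  define m where "m = (n - 1) div q + 1"
  have q: "0 < q" "d = q + 1" using assms(4) unfolding q_def by auto
  obtain U W where UW:
    "\<And>s. s < n \<Longrightarrow> {U s, W s} \<in> E \<and> c (U s) = s \<and> c (W s) = (s + (n - d)) mod n"
    using tight unfolding tight_circ_coloring_def by metis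
  define P where "P i = {v \<in> V. c v div q = i}" for i
  define t where "t i = (i * q + q) mod n" for i
  define e where "e i = {U (t i), W (t i)}" for i
  have cV: "c v < n" if "v \<in> V" for v using c that unfolding circ_coloring_def by blast
  have block_start: "i * q < n" if "i < m" for i
  proof -
    have "i * q \<le> (n - 1) div q * q" using that unfolding m_def by simp
    also have "\<dots> \<le> n - 1" by simp
    finally show ?thesis using assms(4,5) by linarith
  qed
  have t_lt: "t i < n" for i unfolding t_def using assms(4,5) by simp
  have e_colors: "c (U (t i)) = (i * q + q) mod n" "c (W (t i)) = (i * q + (n - 1)) mod n" for i
  proof -
    have "q + (n - d) = n - 1" using q assms(5) by simp
    then show "c (W (t i)) = (i * q + (n - 1)) mod n"
      using UW[OF t_lt] unfolding t_def by (simp add: mod_add_left_eq add.assoc)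
  qed (use UW[OF t_lt] t_def in simp)
  have indep_P: "indep V E (P i)" for i
    unfolding indep_def P_def using c circ_adj_same_block[OF _ q] unfolding circ_coloring_def by blast
  have nonempty_P: "P i \<noteq> {}" if "i < m" for i
  proof -
    have "U (i * q) \<in> V" using UW[OF block_start[OF that]] edge_endpoints[OF G] by blast
    moreover have "c (U (i * q)) div q = i" using UW[OF block_start[OF that]] q by simp
    ultimately show ?thesis unfolding P_def by blast
  qed
  have supports_P: "supports E (e i) (P i)" if "i < m" for i
    unfolding e_def
  proof (rule supports_color_interval[OF c q(2) assms(5) block_start[OF that] _ e_colors])
    show "{U (t i), W (t i)} \<in> E" using UW[OF t_lt] by blast
    show "z \<in> P i \<Longrightarrow> i * q \<le> c z \<and> c z < i * q + q" for z
      using dividend_less_times_div[OF q(1), of "c z"] unfolding P_def by (auto simp: ac_simps)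
  qed (auto simp: P_def)
  have few_edges: "card {i. i < m - a \<and> v \<in> e i} \<le> b" for v
  proof -
    have inj: "inj_on (\<lambda>i. (i * q + r) mod n) {..<m}" for r
      using q(1) block_start by (rule inj_on_mod_progression)
    have "card {i. i < m - a \<and> v \<in> e i} \<le> card {i \<in> {..<m}. v \<in> e i}"
      by (intro card_mono) auto
    also have "\<dots> \<le> 2"
      using card_members_two_injections[OF _ inj[of q] inj[of "n - 1"], where h = c and e = e and v = v] e_colors unfolding e_def by simp
    finally show ?thesis using assms(6) by simp
  qed
  have "(\<Union>i<m. P i) = V"
  proof -
    have "c v div q \<le> (n - 1) div q" if "v \<in> V" for v using cV[OF that] by (intro div_le_mono) simp
    then have "c v div q < m" if "v \<in> V" for v using that unfolding m_def by (simp add: le_imp_less_Suc)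
    then show ?thesis unfolding P_def by blast
  qed
  moreover have "\<forall>i<m. \<forall>j<m. i \<noteq> j \<longrightarrow> P i \<inter> P j = {}" unfolding P_def by blast
  ultimately show ?thesis
    unfolding phi_admissible_def m_def[symmetric] q_def[symmetric]
    using indep_P nonempty_P supports_P supported_indep_is_free[OF G indep_P supports_P] few_edges
    by (intro exI[of _ P] exI[of _ e]) auto
qed

lemma coprime_if_minimal_circ_coloring:
  assumes c: "circ_coloring V E n d c" and "1 \<le> d" "2 * d \<le> n" "n < k * d"
    and minimal: "\<And>n' d'. 1 \<le> d' \<Longrightarrow> n' < k * d' \<Longrightarrow> circ_colorable V E n' d' \<Longrightarrow> n \<le> n'"
  shows "coprime n d"
proof (rule ccontr)
  define g where "g = gcd n d"
  assume "\<not> coprime n d"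
  then have "g \<noteq> 1" unfolding g_def by (simp add: coprime_iff_gcd_eq_1)
  moreover have "0 < g" using assms(2) unfolding g_def by simp
  ultimately have "1 < g" by linarith
  moreover have "g dvd n" "g dvd d" unfolding g_def by simp_all
  ultimately have g: "1 < g" "g dvd n" "g dvd d" by blast+
  then obtain n1 d1 where nd1: "n = g * n1" "d = g * d1" by (meson dvdE)
  then have "n div g = n1" "d div g = d1" using g(1) by simp_all
  then have "circ_colorable V E n1 d1"
    using circ_coloring_div[OF c g(2,3)] g(1) circ_colorable_iff by (metis zero_less_one less_trans)
  moreover have "1 \<le> d1" using assms(2) nd1(2) by (cases d1) simp_all
  moreover have "n1 < k * d1"
  proof -
    have "g * n1 < g * (k * d1)" using assms(4) nd1 by (simp add: ac_simps)
    then show ?thesis by simp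
  qed
  ultimately have "n \<le> n1" using minimal by blast
  moreover have "n1 < n"
  proof -
    have "0 < n1" using nd1(1) assms(2,3) by (cases n1) simp_all
    then show ?thesis using nd1(1) g(1) mult_less_mono1[of 1 g n1] by simp
  qed
  ultimately show False by simp
qed

lemma tight_if_minimal_circ_coloring:
  assumes G: "finite_graph V E" and c: "circ_coloring V E n d c"
    and "2 \<le> d" "2 * d \<le> n" "n < k * d"
    and minimal: "\<And>n' d'. 1 \<le> d' \<Longrightarrow> n' < k * d' \<Longrightarrow> circ_colorable V E n' d' \<Longrightarrow> n \<le> n'"
  shows "tight_circ_coloring E n d c"
proof (rule ccontr)
  assume "\<not> tight_circ_coloring E n d c"
  then obtain c' where c': "circ_coloring V E n d c'" "\<forall>v\<in>V. 1 \<le> c' v"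
    using circ_coloring_avoiding_zero_if_not_tight[OF G c] assms(3,4) by fastforce
  have "coprime n d" using coprime_if_minimal_circ_coloring[OF c _ assms(4,5) minimal] assms(3) by simp
  moreover have "d < n" using assms(3,4) by linarith
  ultimately obtain n' d' where nd': "n * d' = n' * d + 1" "1 \<le> d'" "d' < d" "1 \<le> n'" "n' < n"
    using farey_predecessor assms(3) by blast
  have "circ_colorable V E n' d'" unfolding circ_colorable_iff
    using circ_coloring_scale_down[OF G c' nd'(1) _ nd'(4)] assms(3) by auto
  moreover have "n' < k * d'"
  proof -
    have "n' * d < n * d'" using nd'(1) by simp
    also have "\<dots> < k * d * d'" using assms(5) nd'(2) by simp
    finally show ?thesis by (simp add: ac_simps)
  qed
  ultimately have "n \<le> n'" using minimal nd'(2) by blast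
  then show False using nd'(5) by simp
qed

lemma tight_circ_coloring_below:
  assumes G: "finite_graph V E" and "E \<noteq> {}" and k: "\<And>j. colorable V E j \<Longrightarrow> k \<le> j"
    and "circ_colorable V E n d" "1 \<le> d" "n < k * d"
  obtains n0 d0 c where "circ_coloring V E n0 d0 c" "tight_circ_coloring E n0 d0 c"
    "2 \<le> d0" "2 * d0 \<le> n0" "n0 < k * d0"
proof -
  define N where "N = {n. \<exists>d \<ge> 1. n < k * d \<and> circ_colorable V E n d}"
  define n0 where "n0 = (LEAST n. n \<in> N)"
  have "n0 \<in> N" unfolding n0_def by (rule LeastI[of _ n]) (use assms(4-6) N_def in blast)
  then obtain d0 c where d0: "1 \<le> d0" "n0 < k * d0" and c: "circ_coloring V E n0 d0 c"
    unfolding N_def circ_colorable_iff by blast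
  have minimal: "n0 \<le> n'" if "1 \<le> d'" "n' < k * d'" "circ_colorable V E n' d'" for n' d'
    unfolding n0_def by (rule Least_le) (use that N_def in blast)
  obtain e where "e \<in> E" using assms(2) by blast
  moreover obtain x y where "e = {x, y}" using G calculation unfolding finite_graph_def by blast
  ultimately have "{x, y} \<in> E" by simp
  then have "circ_adj n0 d0 (c x) (c y)" using c unfolding circ_coloring_def by blast
  then have nd0: "2 * d0 \<le> n0" by (rule circ_adj_imp_le)
  have "2 \<le> d0"
  proof (rule ccontr)
    assume "\<not> 2 \<le> d0"
    then have "d0 = 1" using d0(1) by simp
    then have "colorable V E n0" using c unfolding colorable_def circ_coloring_def circ_adj_nat by force
    then show False using k d0(2) \<open>d0 = 1\<close> by fastforce
  qed
  then have "tight_circ_coloring E n0 d0 c"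
    using tight_if_minimal_circ_coloring[OF G c _ nd0 d0(2)] minimal by blast
  then show ?thesis using that c \<open>2 \<le> d0\<close> nd0 d0(2) by blast
qed

lemma num_blocks_lt_twice:
  fixes n d k :: nat
  assumes "n < k * d" "2 \<le> d"
  shows "(n - 1) div (d - 1) + 1 < 2 * k"
proof -
  obtain K D where K: "k = K + 1" and D: "d = D + 2"
    using assms by (metis add.commute le_Suc_ex less_nat_zero_code mult_is_0 not0_implies_Suc plus_1_eq_Suc)
  have "n \<le> (K + 1) * (D + 2) - 1" using assms(1) K D by simp
  also have "\<dots> \<le> (2 * K + 1) * (D + 1)" by (simp add: algebra_simps)
  finally have "n - 1 < (2 * k - 1) * (d - 1)" using K D by simp
  then have "(n - 1) div (d - 1) < 2 * k - 1" by (rule less_mult_imp_div_less)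
  then show ?thesis using K by simp
qed

lemma phi_lt_twice_chromatic_number:
  assumes G: "finite_graph V E" and "2 \<le> b" and "circ_colorable V E n d" "1 \<le> d" "d \<le> n"
    and below: "n < chromatic_number V E * d"
  shows "phi a b V E < 2 * enat (chromatic_number V E)"
proof -
  define k where "k = chromatic_number V E"
  have "E \<noteq> {}"
  proof
    assume "E = {}"
    then have "colorable V E 1" unfolding colorable_def by auto
    then have "k \<le> 1" unfolding k_def by (rule chromatic_number_le)
    then have "k * d \<le> n" using mult_le_mono1[of k 1 d] assms(5) by linarith
    then show False using below unfolding k_def by simp
  qed
  then obtain n0 d0 c where c: "circ_coloring V E n0 d0 c" "tight_circ_coloring E n0 d0 c"
    and nd0: "2 \<le> d0" "2 * d0 \<le> n0" "n0 < k * d0"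
    using tight_circ_coloring_below[OF G _ chromatic_number_le assms(3,4)] below unfolding k_def by blast
  have "phi_admissible a b V E ((n0 - 1) div (d0 - 1) + 1)"
    using phi_admissible_of_tight_circ_coloring[OF G c nd0(1,2) assms(2)] .
  then have "phi a b V E \<le> enat ((n0 - 1) div (d0 - 1) + 1)"
    unfolding phi_def by (intro Inf_lower) blast
  also have "\<dots> < 2 * enat k" using num_blocks_lt_twice[OF nd0(3,1)] by (simp add: numeral_eq_enat)
  finally show ?thesis unfolding k_def .
qed

lemma circular_chromatic_number_eqI:
  assumes G: "finite_graph V E" and "V \<noteq> {}"
    and lower: "\<And>n d. 1 \<le> d \<Longrightarrow> d \<le> n \<Longrightarrow> circ_colorable V E n d \<Longrightarrow> chromatic_number V E * d \<le> n"
  shows "circular_chromatic_number V E = real (chromatic_number V E)"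
proof -
  define k where "k = chromatic_number V E"
  define S where "S = {real n / real d | n d. 1 \<le> d \<and> d \<le> n \<and> circ_colorable V E n d}"
  obtain f where f: "\<forall>v\<in>V. f v < k" "\<forall>u v. {u, v} \<in> E \<longrightarrow> f u \<noteq> f v"
    using colorable_chromatic_number[OF G] unfolding colorable_def k_def by blast
  have "1 \<le> k" using f(1) assms(2) by fastforce
  have "circ_coloring V E k 1 f" unfolding circ_coloring_def
  proof (intro conjI allI impI)
    show "\<forall>v\<in>V. f v < k" by (rule f(1))
    fix u v assume uv: "{u, v} \<in> E"
    then have "f u < k" "f v < k" "f u \<noteq> f v" using f edge_endpoints[OF G uv] by auto
    then show "circ_adj k 1 (f u) (f v)" unfolding circ_adj_nat by linarith
  qed
  then have "real k / real 1 \<in> S" unfolding S_def circ_colorable_iff using \<open>1 \<le> k\<close> by blast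
  moreover have "real k \<le> x" if xS: "x \<in> S" for x
  proof -
    obtain n d where x: "x = real n / real d" "1 \<le> d" "d \<le> n" "circ_colorable V E n d"
      using xS unfolding S_def by blast
    have "k * d \<le> n" unfolding k_def using x(2-4) by (rule lower)
    then have "real k * real d \<le> real n" by (metis of_nat_le_iff of_nat_mult)
    then show ?thesis using x(1,2) by (simp add: le_divide_eq)
  qed
  ultimately have "Inf S = real k" by (intro cInf_eq_minimum) simp_all
  then show ?thesis unfolding circular_chromatic_number_def S_def k_def .
qed

theorem mainTheorem7:
  fixes V :: "'a set" and E :: "'a set set" and a b :: nat
  assumes "finite_graph V E"
    and "V \<noteq> {}"
    and "b \<ge> 2"
    and "phi a b V E \<ge> 2 * enat (chromatic_number V E)"
  shows "circular_chromatic_number V E = real (chromatic_number V E)"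
proof (rule circular_chromatic_number_eqI[OF assms(1,2)])
  fix n d assume "1 \<le> d" "d \<le> n" "circ_colorable V E n d"
  then show "chromatic_number V E * d \<le> n"
    using phi_lt_twice_chromatic_number[OF assms(1,3), of n d a] assms(4) by (meson leD not_le)
qed

end
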